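(* For all positive integers $n,k$, $$N_B(n,k,k+1)\ \ge\ N_P(n,k,k+1)\ \ge\ \Bigl(k-1+\frac1k\Bigr)n.$$
   Context: Fix a finite field $\mathbb{F}_q$; $[n]=\{1,\dots,n\}$. An $(n,N,k,m)$-batch array code (BAC) over $\mathbb{F}_q$ is an $\mathbb{F}_q$-linear map $\mathcal{C}:\mathbf x=(x_1,\dots,x_n)\in\mathbb{F}_q^n\mapsto(\mathbf c_1,\dots,\mathbf c_m)$ with buckets $\mathbf c_\ell\in\mathbb{F}_q^{N_\ell}$, $N_\ell\ge1$ independent of $\mathbf x$, $\sum_\ell N_\ell=N$, such that for every multiset $\{\{i_1,\dots,i_k\}\}$ of elements of $[n]$ there is a partition of $[m]$ into $k$ sets $R_1,\dots,R_k$ such that for each $j\in[k]$, $x_{i_j}$ is an $\mathbb{F}_q$-linear combination of values $f_\ell(\mathbf c_\ell)$, $\ell\in R_j$, for some linear functionals $f_\ell:\mathbb{F}_q^{N_\ell}\to\mathbb{F}_q$ (independent of $\mathbf x$). An $(n,N,k,m)$-PIR array code is defined identically but the requirement is only imposed for multisets $\{\{i,\dots,i\}\}$. $N_P(n,k,m)$ (resp. $N_B(n,k,m)$) is the minimum $N$ for which an $(n,N,k,m)$-PIR array code (resp. BAC) over $\mathbb{F}_q$ exists. *)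

theory Defs
  imports Complex_Main
begin

text \<open>A linear encoder F^n -> F^N, given by its matrix: coordinate t (t < Nb l) of
bucket l (l in 1..m) is the linear form with coefficient vector G l t (indexed by 1..n).\<close>

definition enc :: "(nat \<Rightarrow> nat \<Rightarrow> nat \<Rightarrow> 'a::field) \<Rightarrow> nat \<Rightarrow> (nat \<Rightarrow> 'a) \<Rightarrow> nat \<Rightarrow> nat \<Rightarrow> 'a" where
  "enc G n x l t = (\<Sum>i\<in>{1..n}. G l t i * x i)"

definition recovers :: "nat \<Rightarrow> (nat \<Rightarrow> nat) \<Rightarrow> (nat \<Rightarrow> nat \<Rightarrow> nat \<Rightarrow> 'a::field) \<Rightarrow> nat set \<Rightarrow> nat \<Rightarrow> bool" where
  "recovers n Nb G R i \<longleftrightarrow>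
     (\<exists>(f::nat \<Rightarrow> nat \<Rightarrow> 'a) (lam::nat \<Rightarrow> 'a). \<forall>x::nat \<Rightarrow> 'a.
        x i = (\<Sum>l\<in>R. lam l * (\<Sum>t<Nb l. f l t * enc G n x l t)))"

definition is_partition :: "nat \<Rightarrow> nat \<Rightarrow> (nat \<Rightarrow> nat set) \<Rightarrow> bool" where
  "is_partition m k R \<longleftrightarrow>
     (\<forall>j<k. \<forall>j'<k. j \<noteq> j' \<longrightarrow> R j \<inter> R j' = {}) \<and> (\<Union>j<k. R j) = {1..m}"

definition is_array_code :: "nat \<Rightarrow> nat \<Rightarrow> (nat \<Rightarrow> nat) \<Rightarrow> bool" where
  "is_array_code N m Nb \<longleftrightarrow> (\<forall>l\<in>{1..m}. Nb l \<ge> 1) \<and> (\<Sum>l=1..m. Nb l) = N"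

text \<open>(n,N,k,m)-batch array code: every multiset {{i_1,...,i_k}} over [n]
(given by any enumeration, a list of length k) is served.\<close>

definition is_BAC :: "(nat \<Rightarrow> nat \<Rightarrow> nat \<Rightarrow> 'a::field) \<Rightarrow> (nat \<Rightarrow> nat) \<Rightarrow> nat \<Rightarrow> nat \<Rightarrow> nat \<Rightarrow> nat \<Rightarrow> bool" where
  "is_BAC G Nb n N k m \<longleftrightarrow> is_array_code N m Nb \<and>
     (\<forall>rq. length rq = k \<and> set rq \<subseteq> {1..n} \<longrightarrow>
        (\<exists>R. is_partition m k R \<and> (\<forall>j<k. recovers n Nb G (R j) (rq ! j))))"

definition is_PIR :: "(nat \<Rightarrow> nat \<Rightarrow> nat \<Rightarrow> 'a::field) \<Rightarrow> (nat \<Rightarrow> nat) \<Rightarrow> nat \<Rightarrow> nat \<Rightarrow> nat \<Rightarrow> nat \<Rightarrow> bool" where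
  "is_PIR G Nb n N k m \<longleftrightarrow> is_array_code N m Nb \<and>
     (\<forall>i\<in>{1..n}. \<exists>R. is_partition m k R \<and> (\<forall>j<k. recovers n Nb G (R j) i))"

definition N_P :: "'a::{finite,field} itself \<Rightarrow> nat \<Rightarrow> nat \<Rightarrow> nat \<Rightarrow> nat" where
  "N_P _ n k m = (LEAST N. \<exists>Nb (G::nat \<Rightarrow> nat \<Rightarrow> nat \<Rightarrow> 'a). is_PIR G Nb n N k m)"

definition N_B :: "'a::{finite,field} itself \<Rightarrow> nat \<Rightarrow> nat \<Rightarrow> nat \<Rightarrow> nat" where
  "N_B _ n k m = (LEAST N. \<exists>Nb (G::nat \<Rightarrow> nat \<Rightarrow> nat \<Rightarrow> 'a). is_BAC G Nb n N k m)"

end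

theory Submission
  imports Defs "HOL-Library.FuncSet"
begin

text \<open>
  In a PIR code with k + 1 buckets, every file i is served by a partition of the buckets into
  k - 1 singletons and one pair {a, b}. For buckets a and b let S a, S b be the files recoverable
  from a alone, resp. b alone, and J a b the files recoverable from {a, b} but from neither alone.
  Then |S a| + |S b| + |J a b| \<le> N a + N b: the linear map
  (x, y) \<mapsto> (bucket a of x, bucket b of y, x + y off S a \<inter> S b) on pairs of messages has a
  kernel of pairs (d, -d) with d vanishing on S a \<union> S b \<union> J a b, so counting over the field
  gives q^(2n) \<le> q^(N a + N b + (n - |S a \<inter> S b|) + (n - |S a \<union> S b \<union> J a b|)).
  Summing over the ordered pairs a \<noteq> b bounds 2k \<Sum> |S l| + \<Sum> |J a b| by 2kN. Each file
  contributes at least 2k(k - 1) + 2 to the left-hand side: it lies either in k of the sets S l,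
  or in k - 1 of them and in both J a b and J b a. Hence (2k(k - 1) + 2) n \<le> 2kN.
\<close>

definition vanishing_outside :: "nat set \<Rightarrow> (nat \<Rightarrow> 'a::zero) set" where
  "vanishing_outside D = {x. \<forall>i. i \<notin> D \<longrightarrow> x i = 0}"

lemma bij_betw_restrict_vanishing_outside:
  "bij_betw (\<lambda>x. restrict x D) (vanishing_outside D :: (nat \<Rightarrow> 'a::zero) set) (PiE D (\<lambda>_. UNIV))"
  by (rule bij_betwI[where g = "\<lambda>f i. if i \<in> D then f i else 0"])
     (auto simp: vanishing_outside_def PiE_def extensional_def fun_eq_iff)

lemma finite_vanishing_outside:
  assumes "finite D"
  shows "finite (vanishing_outside D :: (nat \<Rightarrow> 'a::{finite,zero}) set)"
  using bij_betw_restrict_vanishing_outside[of D, where 'a = 'a] assms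
  by (simp add: bij_betw_finite finite_PiE)

lemma card_vanishing_outside:
  assumes "finite D"
  shows "card (vanishing_outside D :: (nat \<Rightarrow> 'a::{finite,zero}) set) = card (UNIV :: 'a set) ^ card D"
  using bij_betw_same_card[OF bij_betw_restrict_vanishing_outside[of D, where 'a = 'a]] assms
  by (simp add: card_PiE)

lemma card_le_card_codomain_mult_fibres:
  assumes "finite X" "h ` X \<subseteq> Y" "finite Y" "\<And>x. x \<in> X \<Longrightarrow> card {x' \<in> X. h x' = h x} \<le> c"
  shows "card X \<le> card Y * c"
proof -
  have "X = (\<Union>y\<in>h ` X. {x \<in> X. h x = y})"
    by auto
  then have "card X \<le> (\<Sum>y\<in>h ` X. card {x \<in> X. h x = y})"
    using card_UN_le[of "h ` X" "\<lambda>y. {x \<in> X. h x = y}"] assms(1) by simp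
  also have "\<dots> \<le> (\<Sum>y\<in>h ` X. c)"
    using assms(4) by (intro sum_mono) blast
  also have "\<dots> \<le> card Y * c"
    using assms(2,3) by (simp add: card_mono mult_le_mono1)
  finally show ?thesis .
qed

lemma restrict_eqD: "restrict f A = restrict g A \<Longrightarrow> x \<in> A \<Longrightarrow> f x = g x"
  by (metis restrict_apply')

lemma enc_diff: "enc G n (x - y) l t = enc G n x l t - enc G n y l t"
  unfolding enc_def by (simp add: right_diff_distrib sum_subtractf)

lemma enc_uminus: "enc G n (- x) l t = - enc G n x l t"
  unfolding enc_def by (simp add: sum_negf)

lemma recovers_imp_zero:
  assumes "recovers n Nb G R i" "\<forall>l\<in>R. \<forall>t<Nb l. enc G n x l t = 0"
  shows "x i = 0"
proof -
  obtain f lam where "x i = (\<Sum>l\<in>R. lam l * (\<Sum>t<Nb l. f l t * enc G n x l t))"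
    using assms(1) unfolding recovers_def by blast
  with assms(2) show ?thesis by simp
qed

lemma recovers_nonempty:
  assumes "recovers n Nb (G :: nat \<Rightarrow> nat \<Rightarrow> nat \<Rightarrow> 'a::field) R i"
  shows "R \<noteq> {}"
proof
  assume "R = {}"
  with assms have "\<forall>x :: nat \<Rightarrow> 'a. x i = 0"
    unfolding recovers_def by simp
  from spec[OF this, of "\<lambda>_. 1"] show False
    by simp
qed

definition recoverable :: "nat \<Rightarrow> (nat \<Rightarrow> nat) \<Rightarrow> (nat \<Rightarrow> nat \<Rightarrow> nat \<Rightarrow> 'a::field) \<Rightarrow> nat set \<Rightarrow> nat set" where
  "recoverable n Nb G R = {i \<in> {1..n}. recovers n Nb G R i}"

definition jointly_recoverable :: "nat \<Rightarrow> (nat \<Rightarrow> nat) \<Rightarrow> (nat \<Rightarrow> nat \<Rightarrow> nat \<Rightarrow> 'a::field) \<Rightarrow> nat \<Rightarrow> nat \<Rightarrow> nat set" where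
  "jointly_recoverable n Nb G a b =
     recoverable n Nb G {a, b} - recoverable n Nb G {a} - recoverable n Nb G {b}"

lemma recoverable_subset: "recoverable n Nb G R \<subseteq> {1..n}"
  by (auto simp: recoverable_def)

lemma jointly_recoverable_subset: "jointly_recoverable n Nb G a b \<subseteq> {1..n}"
  unfolding jointly_recoverable_def using recoverable_subset by blast

lemma jointly_recoverable_commute: "jointly_recoverable n Nb G a b = jointly_recoverable n Nb G b a"
  by (auto simp: jointly_recoverable_def insert_commute)

lemma pair_kernel:
  fixes n :: nat and Nb :: "nat \<Rightarrow> nat" and G :: "nat \<Rightarrow> nat \<Rightarrow> nat \<Rightarrow> 'a::field"
  defines "S l \<equiv> recoverable n Nb G {l}"
  assumes "x \<in> vanishing_outside {1..n}" "y \<in> vanishing_outside {1..n}"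
    and "\<forall>t<Nb a. enc G n x a t = 0" "\<forall>t<Nb b. enc G n y b t = 0"
    and "\<forall>i\<in>{1..n} - (S a \<inter> S b). x i + y i = 0"
  shows "y = - x"
    and "x \<in> vanishing_outside ({1..n} - (S a \<union> S b \<union> jointly_recoverable n Nb G a b))"
proof -
  have xa: "x i = 0" if "i \<in> S a" for i
    using recovers_imp_zero[of n Nb G "{a}" i x] assms(4) that by (simp add: S_def recoverable_def)
  have yb: "y i = 0" if "i \<in> S b" for i
    using recovers_imp_zero[of n Nb G "{b}" i y] assms(5) that by (simp add: S_def recoverable_def)
  have "y i = - x i" for i
  proof (cases "i \<in> {1..n}")
    case True
    then show ?thesis
      using assms(6) xa yb by (cases "i \<in> S a \<inter> S b") (auto simp: eq_neg_iff_add_eq_0 add.commute)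
  next
    case False
    then show ?thesis
      using assms(2,3) by (simp add: vanishing_outside_def)
  qed
  then show y: "y = - x"
    by auto
  have "\<forall>t<Nb b. enc G n x b t = 0"
    using assms(5) by (simp add: y enc_uminus)
  then have xab: "x i = 0" if "i \<in> jointly_recoverable n Nb G a b" for i
    using recovers_imp_zero[of n Nb G "{a, b}" i x] assms(4) that
    by (simp add: jointly_recoverable_def recoverable_def)
  show "x \<in> vanishing_outside ({1..n} - (S a \<union> S b \<union> jointly_recoverable n Nb G a b))"
    unfolding vanishing_outside_def
  proof (intro CollectI allI impI)
    fix i
    assume "i \<notin> {1..n} - (S a \<union> S b \<union> jointly_recoverable n Nb G a b)"
    then consider "i \<notin> {1..n}" | "i \<in> S a" | "i \<in> S b" | "i \<in> jointly_recoverable n Nb G a b"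
      by blast
    then show "x i = 0"
      using assms(2) xa yb[of i] xab y unfolding vanishing_outside_def by cases auto
  qed
qed

definition pair_view ::
    "nat \<Rightarrow> (nat \<Rightarrow> nat) \<Rightarrow> (nat \<Rightarrow> nat \<Rightarrow> nat \<Rightarrow> 'a::field) \<Rightarrow> nat \<Rightarrow> nat \<Rightarrow>
      (nat \<Rightarrow> 'a) \<times> (nat \<Rightarrow> 'a) \<Rightarrow> (nat \<Rightarrow> 'a) \<times> (nat \<Rightarrow> 'a) \<times> (nat \<Rightarrow> 'a)" where
  "pair_view n Nb G a b = (\<lambda>(x, y).
     (restrict (enc G n x a) {..<Nb a}, restrict (enc G n y b) {..<Nb b},
      restrict (\<lambda>i. x i + y i) ({1..n} - (recoverable n Nb G {a} \<inter> recoverable n Nb G {b}))))"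

lemma card_pair_view_fibre_le:
  fixes n a b :: nat and Nb :: "nat \<Rightarrow> nat" and G :: "nat \<Rightarrow> nat \<Rightarrow> nat \<Rightarrow> 'a::{finite,field}"
  defines "V \<equiv> vanishing_outside {1..n} :: (nat \<Rightarrow> 'a) set"
    and "P \<equiv> {1..n} - (recoverable n Nb G {a} \<union> recoverable n Nb G {b} \<union> jointly_recoverable n Nb G a b)"
  assumes "p \<in> V \<times> V"
  shows "card {p' \<in> V \<times> V. pair_view n Nb G a b p' = pair_view n Nb G a b p}
           \<le> card (vanishing_outside P :: (nat \<Rightarrow> 'a) set)"
proof -
  obtain x y where p: "p = (x, y)" and "x \<in> V" "y \<in> V"
    using assms(3) by auto
  have kernel: "x - x' \<in> vanishing_outside P \<and> y - y' = - (x - x')"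
    if "(x', y') \<in> V \<times> V" "pair_view n Nb G a b (x', y') = pair_view n Nb G a b (x, y)" for x' y'
  proof -
    define Q where "Q = {1..n} - (recoverable n Nb G {a} \<inter> recoverable n Nb G {b})"
    have ha: "restrict (enc G n x' a) {..<Nb a} = restrict (enc G n x a) {..<Nb a}"
      and hb: "restrict (enc G n y' b) {..<Nb b} = restrict (enc G n y b) {..<Nb b}"
      and hQ: "restrict (\<lambda>i. x' i + y' i) Q = restrict (\<lambda>i. x i + y i) Q"
      using that(2) by (simp_all add: pair_view_def Q_def)
    have "\<forall>t<Nb a. enc G n (x - x') a t = 0"
      using restrict_eqD[OF ha] by (simp add: enc_diff)
    moreover have "\<forall>t<Nb b. enc G n (y - y') b t = 0"
      using restrict_eqD[OF hb] by (simp add: enc_diff)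
    moreover have "\<forall>i\<in>Q. (x - x') i + (y - y') i = 0"
      using restrict_eqD[OF hQ] by (simp add: algebra_simps)
    moreover have "x - x' \<in> V" "y - y' \<in> V"
      using that(1) \<open>x \<in> V\<close> \<open>y \<in> V\<close> by (auto simp: V_def vanishing_outside_def)
    ultimately show ?thesis
      using pair_kernel[where x = "x - x'" and y = "y - y'"] by (simp add: V_def Q_def P_def)
  qed
  have "inj_on (\<lambda>(x', y'). x - x') {p' \<in> V \<times> V. pair_view n Nb G a b p' = pair_view n Nb G a b p}"
  proof (rule inj_onI, clarsimp simp: p)
    fix x1 y1 x2 y2
    assume "x1 \<in> V" "y1 \<in> V" "pair_view n Nb G a b (x1, y1) = pair_view n Nb G a b (x, y)"
      and "x2 \<in> V" "y2 \<in> V" "pair_view n Nb G a b (x2, y2) = pair_view n Nb G a b (x, y)"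
      and eq: "x - x1 = x - x2"
    then have "y - y1 = y - y2"
      using kernel[of x1 y1] kernel[of x2 y2] by simp
    with eq show "x1 = x2 \<and> y1 = y2"
      by (simp add: fun_eq_iff)
  qed
  moreover have "(\<lambda>(x', y'). x - x') ` {p' \<in> V \<times> V. pair_view n Nb G a b p' = pair_view n Nb G a b p}
                   \<subseteq> vanishing_outside P"
    using kernel by (auto simp: p)
  ultimately show ?thesis
    by (rule card_inj_on_le) (simp add: P_def finite_vanishing_outside)
qed

lemma card_recoverable_pair_le:
  fixes G :: "nat \<Rightarrow> nat \<Rightarrow> nat \<Rightarrow> 'a::{finite,field}"
  shows "card (recoverable n Nb G {a}) + card (recoverable n Nb G {b})
           + card (jointly_recoverable n Nb G a b) \<le> Nb a + Nb b"
proof -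
  define Sa Sb J where "Sa = recoverable n Nb G {a}" and "Sb = recoverable n Nb G {b}"
    and "J = jointly_recoverable n Nb G a b"
  define Q P where "Q = {1..n} - (Sa \<inter> Sb)" and "P = {1..n} - (Sa \<union> Sb \<union> J)"
  define V :: "(nat \<Rightarrow> 'a) set" where "V = vanishing_outside {1..n}"
  define q where "q = card (UNIV :: 'a set)"
  have "pair_view n Nb G a b ` (V \<times> V)
          \<subseteq> PiE {..<Nb a} (\<lambda>_. UNIV) \<times> PiE {..<Nb b} (\<lambda>_. UNIV) \<times> PiE Q (\<lambda>_. UNIV)"
    by (simp add: pair_view_def image_subset_iff split_beta Q_def Sa_def Sb_def)
  from card_le_card_codomain_mult_fibres[OF _ this _
         card_pair_view_fibre_le[where n = n and Nb = Nb and G = G and a = a and b = b, folded V_def]]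
  have "card (V \<times> V) \<le> q ^ Nb a * q ^ Nb b * q ^ card Q * q ^ card P"
    by (auto simp: V_def q_def P_def Q_def Sa_def Sb_def J_def card_cartesian_product card_PiE
        card_vanishing_outside finite_vanishing_outside finite_PiE)
  then have "q ^ (n + n) \<le> q ^ (Nb a + Nb b + card Q + card P)"
    by (simp add: V_def q_def card_cartesian_product card_vanishing_outside power_add)
  moreover have "1 < q"
    using card_mono[of UNIV "{0 :: 'a, 1}"] by (simp add: q_def)
  ultimately have "n + n \<le> Nb a + Nb b + card Q + card P"
    using power_le_imp_le_exp by blast
  moreover have sub: "Sa \<union> Sb \<union> J \<subseteq> {1..n}" and "J \<inter> (Sa \<union> Sb) = {}"
    by (auto simp: Sa_def Sb_def J_def recoverable_def jointly_recoverable_def)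
  then have "finite Sa" "finite Sb" "finite J"
    by (auto intro: finite_subset)
  have "card Q + card (Sa \<inter> Sb) = n"
    using card_Int_Diff[of "{1..n}" "Sa \<inter> Sb"] sub by (simp add: Q_def Int_absorb1 inf.coboundedI1)
  moreover have "card P + card (Sa \<union> Sb \<union> J) = n"
    using card_Int_Diff[of "{1..n}" "Sa \<union> Sb \<union> J"] sub by (simp add: P_def Int_absorb1 del: Un_subset_iff)
  moreover have "card (Sa \<union> Sb \<union> J) = card (Sa \<union> Sb) + card J"
    using \<open>J \<inter> (Sa \<union> Sb) = {}\<close> \<open>finite Sa\<close> \<open>finite Sb\<close> \<open>finite J\<close> by (simp add: card_Un_disjoint Int_commute)
  moreover have "card (Sa \<union> Sb) + card (Sa \<inter> Sb) = card Sa + card Sb"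
    using card_Un_Int[OF \<open>finite Sa\<close> \<open>finite Sb\<close>] by simp
  ultimately show ?thesis
    by (simp add: Sa_def Sb_def J_def)
qed

lemma partition_Suc_into_nonempty:
  assumes "is_partition (k + 1) k R" and "\<forall>j<k. R j \<noteq> {}"
  obtains j0 a b where "j0 < k" "a \<noteq> b" "R j0 = {a, b}"
    and "\<forall>l\<in>{1..k+1} - {a, b}. \<exists>j<k. R j = {l}"
proof -
  have disj: "\<forall>j<k. \<forall>j'<k. j \<noteq> j' \<longrightarrow> R j \<inter> R j' = {}" and un: "(\<Union>j<k. R j) = {1..k+1}"
    using assms(1) unfolding is_partition_def by auto
  have fin: "finite (R j)" if "j < k" for j
    using finite_subset[of "R j" "{1..k+1}"] un that by blast
  have pos: "card (R j) \<ge> 1" if "j < k" for j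
    using assms(2) fin that by (simp add: Suc_le_eq card_gt_0_iff)
  have "(\<Sum>j<k. card (R j)) = k + 1"
    using card_UN_disjoint[of "{..<k}" R] fin disj un by simp
  then have excess: "(\<Sum>j<k. card (R j) - 1) = 1"
    using pos by (subst sum_subtractf_nat) auto
  then obtain j0 where j0: "j0 \<in> {..<k}" "card (R j0) - 1 = 1"
    and others: "\<forall>j\<in>{..<k}. j0 \<noteq> j \<longrightarrow> card (R j) - 1 = 0"
    unfolding sum_eq_1_iff[OF finite_lessThan] by blast
  then have "card (R j0) = 2"
    by simp
  then obtain a b where ab: "a \<noteq> b" "R j0 = {a, b}"
    by (auto simp: card_2_iff)
  have singles: "\<exists>j<k. R j = {l}" if l: "l \<in> {1..k+1} - {a, b}" for l
  proof -
    obtain j where j: "j < k" "l \<in> R j"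
      using un l by blast
    then have "j \<noteq> j0"
      using l ab by auto
    then have "card (R j) - 1 = 0"
      using others j(1) by simp
    with pos[OF j(1)] have "card (R j) = 1"
      by simp
    with j show ?thesis
      by (metis card_1_singletonE singletonD)
  qed
  show ?thesis
    using j0(1) by (intro that[OF _ ab]) (use singles in auto)
qed

lemma sum_offdiagonal_add:
  fixes g :: "'b \<Rightarrow> 'a::comm_semiring_1"
  assumes "finite L"
  shows "(\<Sum>a\<in>L. \<Sum>b\<in>L - {a}. g a + g b) = of_nat (2 * (card L - 1)) * sum g L"
proof -
  have card: "card (L - {a}) = card L - 1" if "a \<in> L" for a
    using assms that by simp
  have "(\<Sum>a\<in>L. \<Sum>b\<in>L - {a}. g b) = (\<Sum>a\<in>L. \<Sum>b\<in>{b. b \<in> L \<and> b \<noteq> a}. g b)"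
    by (simp add: set_diff_eq conj_commute)
  also have "\<dots> = (\<Sum>b\<in>L. \<Sum>a\<in>{a. a \<in> L \<and> b \<noteq> a}. g b)"
    using sum.swap_restrict[OF assms assms, of "\<lambda>a b. g b" "\<lambda>a b. b \<noteq> a"] by simp
  also have "\<dots> = (\<Sum>b\<in>L. \<Sum>a\<in>L - {b}. g b)"
    by (simp add: set_diff_eq eq_commute)
  finally have "(\<Sum>a\<in>L. \<Sum>b\<in>L - {a}. g a + g b) = 2 * (\<Sum>a\<in>L. of_nat (card (L - {a})) * g a)"
    by (simp add: sum.distrib mult_2)
  also have "\<dots> = of_nat (2 * (card L - 1)) * sum g L"
    using card by (simp add: sum_distrib_left mult.assoc)
  finally show ?thesis .
qed

lemma sum_offdiagonal_ge_pair:
  fixes f :: "'a \<Rightarrow> 'a \<Rightarrow> nat"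
  assumes "finite L" "a \<in> L" "b \<in> L" "a \<noteq> b"
  shows "f a b + f b a \<le> (\<Sum>a'\<in>L. \<Sum>b'\<in>L - {a'}. f a' b')"
proof -
  have "f a b + f b a \<le> (\<Sum>b'\<in>L - {a}. f a b') + (\<Sum>b'\<in>L - {b}. f b b')"
    using assms by (intro add_mono member_le_sum) auto
  also have "\<dots> = (\<Sum>a'\<in>{a, b}. \<Sum>b'\<in>L - {a'}. f a' b')"
    using assms(4) by simp
  also have "\<dots> \<le> (\<Sum>a'\<in>L. \<Sum>b'\<in>L - {a'}. f a' b')"
    using assms by (intro sum_mono2) auto
  finally show ?thesis .
qed

definition file_weight :: "nat \<Rightarrow> (nat \<Rightarrow> nat) \<Rightarrow> (nat \<Rightarrow> nat \<Rightarrow> nat \<Rightarrow> 'a::field) \<Rightarrow> nat \<Rightarrow> nat \<Rightarrow> nat" where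
  "file_weight n Nb G m i =
     2 * (m - 1) * (\<Sum>l=1..m. of_bool (i \<in> recoverable n Nb G {l}))
     + (\<Sum>a=1..m. \<Sum>b\<in>{1..m} - {a}. of_bool (i \<in> jointly_recoverable n Nb G a b))"

lemma sum_file_weight_le:
  fixes G :: "nat \<Rightarrow> nat \<Rightarrow> nat \<Rightarrow> 'a::{finite,field}"
  assumes "is_array_code N m Nb"
  shows "(\<Sum>i=1..n. file_weight n Nb G m i) \<le> 2 * (m - 1) * N"
proof -
  define S where "S l = recoverable n Nb G {l}" for l
  define J where "J a b = jointly_recoverable n Nb G a b" for a b
  have "(\<Sum>i=1..n. \<Sum>l=1..m. of_bool (i \<in> S l)) = (\<Sum>l=1..m. card (S l))"
    by (subst sum.swap) (simp add: S_def Int_absorb1 recoverable_subset del: One_nat_def)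
  moreover have "(\<Sum>i=1..n. \<Sum>a=1..m. \<Sum>b\<in>{1..m} - {a}. of_bool (i \<in> J a b))
      = (\<Sum>a=1..m. \<Sum>b\<in>{1..m} - {a}. card (J a b))"
  proof -
    have "(\<Sum>i=1..n. \<Sum>a=1..m. \<Sum>b\<in>{1..m} - {a}. of_bool (i \<in> J a b))
        = (\<Sum>a=1..m. \<Sum>b\<in>{1..m} - {a}. \<Sum>i=1..n. of_bool (i \<in> J a b))"
      by (rule trans[OF sum.swap sum.cong[OF refl sum.swap]])
    also have "\<dots> = (\<Sum>a=1..m. \<Sum>b\<in>{1..m} - {a}. card (J a b))"
      by (simp add: J_def Int_absorb1 jointly_recoverable_subset del: One_nat_def)
    finally show ?thesis .
  qed
  ultimately have "(\<Sum>i=1..n. file_weight n Nb G m i)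
      = 2 * (m - 1) * (\<Sum>l=1..m. card (S l)) + (\<Sum>a=1..m. \<Sum>b\<in>{1..m} - {a}. card (J a b))"
    by (simp add: file_weight_def sum.distrib sum_distrib_left[symmetric] S_def J_def)
  also have "\<dots> = (\<Sum>a=1..m. \<Sum>b\<in>{1..m} - {a}. card (S a) + card (S b) + card (J a b))"
    using sum_offdiagonal_add[of "{1..m}" "\<lambda>l. card (S l)"] by (simp add: sum.distrib)
  also have "\<dots> \<le> (\<Sum>a=1..m. \<Sum>b\<in>{1..m} - {a}. Nb a + Nb b)"
    unfolding S_def J_def by (intro sum_mono card_recoverable_pair_le)
  also have "\<dots> = 2 * (m - 1) * N"
    using sum_offdiagonal_add[of "{1..m}" Nb] assms by (simp add: is_array_code_def)
  finally show ?thesis .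
qed

lemma PIR_file_served_by_pair:
  assumes "is_PIR G Nb n N k (k + 1)" and "i \<in> {1..n}"
  obtains a b where "a \<in> {1..k+1}" "b \<in> {1..k+1}" "a \<noteq> b" "i \<in> recoverable n Nb G {a, b}"
    and "\<forall>l\<in>{1..k+1} - {a, b}. i \<in> recoverable n Nb G {l}"
proof -
  obtain R where part: "is_partition (k + 1) k R" and rec: "\<forall>j<k. recovers n Nb G (R j) i"
    using assms unfolding is_PIR_def by blast
  then have "\<forall>j<k. R j \<noteq> {}"
    using recovers_nonempty by blast
  with part obtain j0 a b where j0: "j0 < k" "a \<noteq> b" "R j0 = {a, b}"
    and singles: "\<forall>l\<in>{1..k+1} - {a, b}. \<exists>j<k. R j = {l}"
    by (rule partition_Suc_into_nonempty)
  have "R j0 \<subseteq> {1..k+1}"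
    using part j0(1) unfolding is_partition_def by blast
  then have "a \<in> {1..k+1}" "b \<in> {1..k+1}"
    using j0(3) by auto
  moreover have "i \<in> recoverable n Nb G {a, b}"
    using rec[rule_format, OF j0(1)] j0(3) assms(2) by (simp add: recoverable_def)
  moreover have "\<forall>l\<in>{1..k+1} - {a, b}. i \<in> recoverable n Nb G {l}"
  proof
    fix l
    assume "l \<in> {1..k+1} - {a, b}"
    then obtain j where "j < k" "R j = {l}"
      using singles by blast
    with rec assms(2) show "i \<in> recoverable n Nb G {l}"
      by (auto simp: recoverable_def)
  qed
  ultimately show ?thesis
    using that j0(2) by blast
qed

lemma file_weight_ge:
  fixes G :: "nat \<Rightarrow> nat \<Rightarrow> nat \<Rightarrow> 'a::field"
  assumes "k \<ge> 1" "a \<in> {1..k+1}" "b \<in> {1..k+1}" "a \<noteq> b" "i \<in> recoverable n Nb G {a, b}"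
    and "\<forall>l\<in>{1..k+1} - {a, b}. i \<in> recoverable n Nb G {l}"
  shows "2 * k * k + 2 \<le> file_weight n Nb G (k + 1) i + 2 * k"
proof -
  define L where "L = {1..k+1}"
  define C where "C = L \<inter> {l. i \<in> recoverable n Nb G {l}}"
  define c where "c = (\<Sum>a'\<in>L. \<Sum>b'\<in>L - {a'}. of_bool (i \<in> jointly_recoverable n Nb G a' b') :: nat)"
  have weight: "file_weight n Nb G (k + 1) i = 2 * k * card C + c"
    unfolding file_weight_def L_def C_def c_def
    by (simp only: sum_of_bool_eq[OF finite_atLeastAtMost finite_atLeastAtMost] of_nat_id
        add_diff_cancel_right')
  have sub: "L - {a, b} \<subseteq> C" and card: "card (L - {a, b}) = k - 1"
    using assms by (auto simp: L_def C_def)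
  have "finite C"
    by (simp add: C_def L_def)
  then have "k - 1 \<le> card C"
    using card_mono[OF _ sub] card by simp
  show ?thesis
  proof (cases "i \<in> recoverable n Nb G {a} \<or> i \<in> recoverable n Nb G {b}")
    case True
    then obtain x where "x \<in> {a, b}" "i \<in> recoverable n Nb G {x}"
      by blast
    then have "insert x (L - {a, b}) \<subseteq> C"
      using sub assms(2,3) by (auto simp: C_def L_def)
    moreover have "card (insert x (L - {a, b})) = k"
      using card assms(1) \<open>x \<in> {a, b}\<close> by (simp add: L_def)
    ultimately have "k \<le> card C"
      using card_mono[OF \<open>finite C\<close>] by metis
    then have "2 * k * k \<le> 2 * k * card C"
      by simp
    with weight assms(1) show ?thesis
      by linarith
  next
    case False
    then have "i \<in> jointly_recoverable n Nb G a b"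
      using assms(5) by (simp add: jointly_recoverable_def)
    moreover have "of_bool (i \<in> jointly_recoverable n Nb G a b)
        + of_bool (i \<in> jointly_recoverable n Nb G b a) \<le> c"
      unfolding c_def by (rule sum_offdiagonal_ge_pair) (use assms(2-4) in \<open>auto simp: L_def\<close>)
    ultimately have "2 \<le> c"
      by (simp add: jointly_recoverable_commute)
    moreover have "k \<le> card C + 1"
      using \<open>k - 1 \<le> card C\<close> by simp
    then have "2 * k * k \<le> 2 * k * (card C + 1)"
      by (rule mult_le_mono2)
    ultimately show ?thesis
      using weight by simp
  qed
qed

lemma PIR_length_lower_bound:
  fixes G :: "nat \<Rightarrow> nat \<Rightarrow> nat \<Rightarrow> 'a::{finite,field}"
  assumes "is_PIR G Nb n N k (k + 1)" and "k \<ge> 1"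
  shows "(real k - 1 + 1 / real k) * real n \<le> real N"
proof -
  have "(\<Sum>i=1..n. 2 * k * k + 2) \<le> (\<Sum>i=1..n. file_weight n Nb G (k + 1) i + 2 * k)"
  proof (rule sum_mono)
    fix i
    assume "i \<in> {1..n}"
    with assms(1) obtain a b where "a \<in> {1..k+1}" "b \<in> {1..k+1}" "a \<noteq> b"
      "i \<in> recoverable n Nb G {a, b}" "\<forall>l\<in>{1..k+1} - {a, b}. i \<in> recoverable n Nb G {l}"
      by (rule PIR_file_served_by_pair)
    with assms(2) show "2 * k * k + 2 \<le> file_weight n Nb G (k + 1) i + 2 * k"
      by (rule file_weight_ge)
  qed
  also have "\<dots> \<le> 2 * k * N + 2 * k * n"
    using sum_file_weight_le[of N "k + 1" Nb n G] assms(1)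
    by (simp add: is_PIR_def sum.distrib)
  finally have "(2 * k * k + 2) * n \<le> 2 * k * N + 2 * k * n"
    by (simp add: mult.commute)
  then have "2 * real k * real k * real n + 2 * real n \<le> 2 * real k * real N + 2 * real k * real n"
    by (metis (mono_tags) distrib_right of_nat_add of_nat_le_iff of_nat_mult of_nat_numeral)
  then have "real k * (real k * real n - real n) + real n \<le> real k * real N"
    by (simp add: algebra_simps)
  with assms(2) show ?thesis
    by (simp add: field_simps)
qed

definition replication_code :: "nat \<Rightarrow> nat \<Rightarrow> nat \<Rightarrow> 'a::field" where
  "replication_code l t j = of_bool (j = Suc t)"

lemma enc_replication_code:
  assumes "t < n"
  shows "enc replication_code n x l t = x (Suc t)"
proof -
  have "enc replication_code n x l t = (\<Sum>j\<in>{1..n}. if j = Suc t then x j else 0)"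
    unfolding enc_def replication_code_def by (rule sum.cong) simp_all
  also have "\<dots> = x (Suc t)"
    using assms by (simp add: sum.delta)
  finally show ?thesis .
qed

lemma recovers_replication_code:
  assumes "finite R" "l0 \<in> R" "i \<in> {1..n}"
  shows "recovers n (\<lambda>_. n) (replication_code :: nat \<Rightarrow> nat \<Rightarrow> nat \<Rightarrow> 'a::field) R i"
  unfolding recovers_def
proof (intro exI allI)
  fix x :: "nat \<Rightarrow> 'a"
  have "(\<Sum>t<n. of_bool (t = i - 1) * enc replication_code n x l t)
      = (\<Sum>t<n. if t = i - 1 then x (Suc t) else 0)" for l
    by (rule sum.cong) (simp_all add: enc_replication_code)
  also have "\<dots> = x i"
    using assms(3) by (auto simp: sum.delta)
  finally show "x i = (\<Sum>l\<in>R. of_bool (l = l0) *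
                       (\<Sum>t<n. of_bool (t = i - 1) * enc replication_code n x l t))"
    using assms(1,2) by (simp add: if_distrib sum.delta cong: if_cong)
qed

lemma replication_code_is_BAC:
  assumes "1 \<le> n" "1 \<le> k" "k \<le> m"
  shows "is_BAC (replication_code :: nat \<Rightarrow> nat \<Rightarrow> nat \<Rightarrow> 'a::field) (\<lambda>_. n) n (m * n) k m"
  unfolding is_BAC_def
proof (intro conjI allI impI)
  show "is_array_code (m * n) m (\<lambda>_. n)"
    using assms(1) by (simp add: is_array_code_def)
  define R where "R j = (if j = 0 then insert 1 {k+1..m} else {Suc j})" for j
  have "l \<in> (\<Union>j<k. R j)" if "l \<in> {1..m}" for l
  proof (cases "l \<le> k")
    case True
    then have "l \<in> R (l - 1)"
      using that by (auto simp: R_def)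
    with True that show ?thesis
      by (metis UN_iff diff_less lessThan_iff less_le_trans zero_less_one atLeastAtMost_iff)
  next
    case False
    with that assms(2) show ?thesis
      by (auto simp: R_def)
  qed
  moreover have "(\<Union>j<k. R j) \<subseteq> {1..m}"
    using assms(2,3) by (auto simp: R_def)
  ultimately have "(\<Union>j<k. R j) = {1..m}"
    by blast
  moreover have "\<forall>j<k. \<forall>j'<k. j \<noteq> j' \<longrightarrow> R j \<inter> R j' = {}"
    by (auto simp: R_def)
  ultimately have "is_partition m k R"
    by (simp add: is_partition_def)
  moreover have "Suc j \<in> R j" "finite (R j)" for j
    by (simp_all add: R_def)
  moreover fix rq :: "nat list"
  assume "length rq = k \<and> set rq \<subseteq> {1..n}"
  then have "rq ! j \<in> {1..n}" if "j < k" for j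
    using that nth_mem by blast
  ultimately show "\<exists>R. is_partition m k R \<and> (\<forall>j<k. recovers n (\<lambda>_. n) replication_code (R j) (rq ! j))"
    using recovers_replication_code by blast
qed

lemma is_PIR_if_is_BAC:
  assumes "is_BAC G Nb n N k m"
  shows "is_PIR G Nb n N k m"
  unfolding is_PIR_def
proof (intro conjI ballI)
  show "is_array_code N m Nb"
    using assms by (simp add: is_BAC_def)
  fix i
  assume "i \<in> {1..n}"
  then have "length (replicate k i) = k \<and> set (replicate k i) \<subseteq> {1..n}"
    by (simp add: set_replicate_conv_if)
  then obtain R where "is_partition m k R" "\<forall>j<k. recovers n Nb G (R j) (replicate k i ! j)"
    using assms unfolding is_BAC_def by blast
  then show "\<exists>R. is_partition m k R \<and> (\<forall>j<k. recovers n Nb G (R j) i)"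
    by auto
qed

lemma N_B_attained:
  fixes G :: "nat \<Rightarrow> nat \<Rightarrow> nat \<Rightarrow> 'a::{finite,field}"
  assumes "is_BAC G Nb n N k m"
  obtains Nb' and G' :: "nat \<Rightarrow> nat \<Rightarrow> nat \<Rightarrow> 'a" where "is_BAC G' Nb' n (N_B TYPE('a) n k m) k m"
  using LeastI_ex[of "\<lambda>N. \<exists>Nb (G :: nat \<Rightarrow> nat \<Rightarrow> nat \<Rightarrow> 'a). is_BAC G Nb n N k m"] assms
  unfolding N_B_def by blast

lemma N_P_attained:
  fixes G :: "nat \<Rightarrow> nat \<Rightarrow> nat \<Rightarrow> 'a::{finite,field}"
  assumes "is_PIR G Nb n N k m"
  obtains Nb' and G' :: "nat \<Rightarrow> nat \<Rightarrow> nat \<Rightarrow> 'a" where "is_PIR G' Nb' n (N_P TYPE('a) n k m) k m"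
  using LeastI_ex[of "\<lambda>N. \<exists>Nb (G :: nat \<Rightarrow> nat \<Rightarrow> nat \<Rightarrow> 'a). is_PIR G Nb n N k m"] assms
  unfolding N_P_def by blast

lemma N_P_le:
  assumes "is_PIR (G :: nat \<Rightarrow> nat \<Rightarrow> nat \<Rightarrow> 'a::{finite,field}) Nb n N k m"
  shows "N_P TYPE('a) n k m \<le> N"
  unfolding N_P_def using assms by (blast intro: Least_le)

theorem corollary3p3:
  fixes n k :: nat
  assumes "n \<ge> 1" and "k \<ge> 1"
  shows "N_B TYPE('a::{finite,field}) n k (k+1) \<ge> N_P TYPE('a) n k (k+1)
       \<and> real (N_P TYPE('a) n k (k+1)) \<ge> (real k - 1 + 1 / real k) * real n"
proof -
  \<comment> \<open>Some code exists, so the LEAST in the definitions of N_B and N_P is attained.\<close>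
  have "is_BAC (replication_code :: nat \<Rightarrow> nat \<Rightarrow> nat \<Rightarrow> 'a) (\<lambda>_. n) n ((k + 1) * n) k (k + 1)"
    using assms by (intro replication_code_is_BAC) simp_all
  then obtain Nb and G :: "nat \<Rightarrow> nat \<Rightarrow> nat \<Rightarrow> 'a"
    where "is_BAC G Nb n (N_B TYPE('a) n k (k+1)) k (k+1)"
    by (rule N_B_attained)
  then have PIR: "is_PIR G Nb n (N_B TYPE('a) n k (k+1)) k (k+1)"
    by (rule is_PIR_if_is_BAC)
  then obtain Nb' and G' :: "nat \<Rightarrow> nat \<Rightarrow> nat \<Rightarrow> 'a"
    where "is_PIR G' Nb' n (N_P TYPE('a) n k (k+1)) k (k+1)"
    by (rule N_P_attained)
  with N_P_le[OF PIR] assms(2) show ?thesis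
    by (simp add: PIR_length_lower_bound)
qed

end
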